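(* For every set $\Gamma\subseteq\mathcal{L}(\boxdot)$ and every $\phi\in\mathcal{L}(\boxdot)$, the following are equivalent: (a) $\Gamma\vdash_{{\bf K4^\boxdot}}\phi$; (b) $\Gamma\vDash_{qt}\phi$; (c) $\Gamma\vDash_{pt}\phi$.
   Context: Fix a nonempty set $\mathbf{P}$ of propositional variables. A bimodal model is $\langle S,R_1,R_2,V\rangle$ with $S$ nonempty, $R_1,R_2\subseteq S\times S$, $V:\mathbf{P}\to\mathcal{P}(S)$. $\mathcal{L}(\boxdot):\ \phi::=p\mid\neg\phi\mid(\phi\wedge\phi)\mid\boxdot\phi$. Truth: $\mathcal{M},s\vDash\boxdot\phi$ iff for all $t,u$ with $sR_1t$ and $sR_2u$, ($\mathcal{M},t\vDash\phi\iff\mathcal{M},u\vDash\phi$); atoms and Booleans as usual. ${\bf K^\boxdot}$ has axioms: all instances of propositional tautologies; $\boxdot\top$; $\boxdot\phi\leftrightarrow\boxdot\neg\phi$; $\boxdot\phi\wedge\boxdot\psi\to\boxdot(\phi\wedge\psi)$; $\boxdot\phi\to\boxdot(\phi\vee\psi)\vee\boxdot(\neg\phi\vee\chi)$; rules: modus ponens and RE: from $\phi\leftrightarrow\psi$ infer $\boxdot\phi\leftrightarrow\boxdot\psi$. ${\bf K4^\boxdot}$ is ${\bf K^\boxdot}$ plus the axiom schema $\boxdot\phi\to\boxdot(\boxdot\phi\vee\psi)$. A bimodal frame/model is $qt$ (quasi-transitive) if for all $i,j\in\{1,2\}$ and all $x,y,z$: $xR_iy\wedge yR_jz\to xR_jz$;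 it is $pt$ (pseudo-transitive) if for all $i,j\in\{1,2\}$ and all $x,y,z$: $xR_iy\wedge yR_jz\to xR_1z\wedge xR_2z$. $\Gamma\vDash_{qt}\phi$ means: for every $qt$-model $\mathcal{M}$ and state $s$, if all of $\Gamma$ is true at $s$ then $\phi$ is true at $s$; similarly $\vDash_{pt}$. $\Gamma\vdash\phi$ means some finite conjunction of members of $\Gamma$ provably implies $\phi$. *)

theory Defs
  imports Main
begin

datatype 'p fm = Atom 'p | Neg "'p fm" | And "'p fm" "'p fm" | Bdot "'p fm"

definition Or :: "'p fm \<Rightarrow> 'p fm \<Rightarrow> 'p fm" where
  "Or a b = Neg (And (Neg a) (Neg b))"
definition Imp :: "'p fm \<Rightarrow> 'p fm \<Rightarrow> 'p fm" where
  "Imp a b = Neg (And a (Neg b))"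
definition Iff :: "'p fm \<Rightarrow> 'p fm \<Rightarrow> 'p fm" where
  "Iff a b = And (Imp a b) (Imp b a)"
definition Top :: "'p fm" where
  "Top = Neg (And (Atom undefined) (Neg (Atom undefined)))"

fun peval :: "('p fm \<Rightarrow> bool) \<Rightarrow> 'p fm \<Rightarrow> bool" where
  "peval g (Atom p) = g (Atom p)"
| "peval g (Neg a) = (\<not> peval g a)"
| "peval g (And a b) = (peval g a \<and> peval g b)"
| "peval g (Bdot a) = g (Bdot a)"

definition tautology :: "'p fm \<Rightarrow> bool" where
  "tautology a \<longleftrightarrow> (\<forall>g. peval g a)"

inductive K4thm :: "'p fm \<Rightarrow> bool" where
  Taut: "tautology a \<Longrightarrow> K4thm a"
| BTop: "K4thm (Bdot Top)"
| BNeg: "K4thm (Iff (Bdot a) (Bdot (Neg a)))"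
| BAnd: "K4thm (Imp (And (Bdot a) (Bdot b)) (Bdot (And a b)))"
| BSplit: "K4thm (Imp (Bdot a) (Or (Bdot (Or a b)) (Bdot (Or (Neg a) c))))"
| B4: "K4thm (Imp (Bdot a) (Bdot (Or (Bdot a) b)))"
| MP: "K4thm (Imp a b) \<Longrightarrow> K4thm a \<Longrightarrow> K4thm b"
| RE: "K4thm (Iff a b) \<Longrightarrow> K4thm (Iff (Bdot a) (Bdot b))"

definition conj_list :: "'p fm list \<Rightarrow> 'p fm" where
  "conj_list L = foldr And L Top"

definition K4_derives :: "'p fm set \<Rightarrow> 'p fm \<Rightarrow> bool" where
  "K4_derives \<Gamma> a \<longleftrightarrow> (\<exists>L. set L \<subseteq> \<Gamma> \<and> K4thm (Imp (conj_list L) a))"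

type_synonym ('s,'p) model = "'s set \<times> ('s \<times> 's) set \<times> ('s \<times> 's) set \<times> ('p \<Rightarrow> 's set)"

definition is_model :: "('s,'p) model \<Rightarrow> bool" where
  "is_model M \<longleftrightarrow> (case M of (S, R1, R2, V) \<Rightarrow>
     S \<noteq> {} \<and> R1 \<subseteq> S \<times> S \<and> R2 \<subseteq> S \<times> S \<and> (\<forall>p. V p \<subseteq> S))"

fun sat :: "('s,'p) model \<Rightarrow> 's \<Rightarrow> 'p fm \<Rightarrow> bool" where
  "sat (S, R1, R2, V) s (Atom p) = (s \<in> V p)"
| "sat M s (Neg a) = (\<not> sat M s a)"
| "sat M s (And a b) = (sat M s a \<and> sat M s b)"
| "sat (S, R1, R2, V) s (Bdot a) =
     (\<forall>t u. (s, t) \<in> R1 \<and> (s, u) \<in> R2 \<longrightarrow> (sat (S, R1, R2, V) t a \<longleftrightarrow> sat (S, R1, R2, V) u a))"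

definition rel :: "('s,'p) model \<Rightarrow> nat \<Rightarrow> ('s \<times> 's) set" where
  "rel M i = (case M of (S, R1, R2, V) \<Rightarrow> if i = 1 then R1 else R2)"

definition qt :: "('s,'p) model \<Rightarrow> bool" where
  "qt M \<longleftrightarrow> (\<forall>i\<in>{1,2}. \<forall>j\<in>{1,2}. \<forall>x y z.
      (x, y) \<in> rel M i \<and> (y, z) \<in> rel M j \<longrightarrow> (x, z) \<in> rel M j)"

definition pt :: "('s,'p) model \<Rightarrow> bool" where
  "pt M \<longleftrightarrow> (\<forall>i\<in>{1,2}. \<forall>j\<in>{1,2}. \<forall>x y z.
      (x, y) \<in> rel M i \<and> (y, z) \<in> rel M j \<longrightarrow> (x, z) \<in> rel M 1 \<and> (x, z) \<in> rel M 2)"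

definition conseq :: "'s itself \<Rightarrow> (('s,'p) model \<Rightarrow> bool) \<Rightarrow> 'p fm set \<Rightarrow> 'p fm \<Rightarrow> bool" where
  "conseq _ C \<Gamma> a \<longleftrightarrow> (\<forall>M s. is_model M \<and> C M \<and> s \<in> fst M \<and> (\<forall>g\<in>\<Gamma>. sat M s g) \<longrightarrow> sat M s a)"

abbreviation qt_conseq :: "'s itself \<Rightarrow> 'p fm set \<Rightarrow> 'p fm \<Rightarrow> bool" where
  "qt_conseq T \<equiv> conseq T qt"
abbreviation pt_conseq :: "'s itself \<Rightarrow> 'p fm set \<Rightarrow> 'p fm \<Rightarrow> bool" where
  "pt_conseq T \<equiv> conseq T pt"

end

theory Submission
  imports Defs
begin

text \<open>
  Soundness: \<open>\<boxdot>\<phi>\<close> holds at \<open>s\<close> iff \<open>\<phi>\<close> has one truth value throughout all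
  \<open>R\<^sub>1\<close>- and \<open>R\<^sub>2\<close>-successors of \<open>s\<close> (when both kinds exist); this makes the splitting
  axiom valid, and on quasi-transitive models the successors of a successor of \<open>s\<close> are
  successors of \<open>s\<close>, which validates axiom 4.

  Completeness for pseudo-transitive models: in the canonical model over maximal consistent
  sets, \<open>X\<close> sees \<open>Y\<close> iff \<open>Y\<close> contains every \<open>a\<close> such that \<open>\<boxdot>(a \<or> b) \<in> X\<close> for all \<open>b\<close>.
  Axiom 4 makes this relation transitive, so taking it as both \<open>R\<^sub>1\<close> and \<open>R\<^sub>2\<close> yields a
  pseudo-transitive model, and the splitting axiom gives the truth lemma for \<open>\<boxdot>\<close>. Since
  every pseudo-transitive model is quasi-transitive, the three notions coincide.
\<close>

section \<open>Propositional reasoning in K4\<close>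

lemma peval_Or [simp]: "peval g (Or a b) = (peval g a \<or> peval g b)"
  by (simp add: Or_def)

lemma peval_Imp [simp]: "peval g (Imp a b) = (peval g a \<longrightarrow> peval g b)"
  by (simp add: Imp_def)

lemma peval_Iff [simp]: "peval g (Iff a b) = (peval g a \<longleftrightarrow> peval g b)"
  by (auto simp: Iff_def)

lemma peval_Top [simp]: "peval g Top"
  by (simp add: Top_def)

lemma peval_conj_list [simp]: "peval g (conj_list L) = (\<forall>x\<in>set L. peval g x)"
  by (induction L) (auto simp: conj_list_def)

lemma K4thm_tautI: "(\<And>g. peval g a) \<Longrightarrow> K4thm a"
  by (rule Taut) (simp add: tautology_def)

lemma K4thm_taut_mp:
  assumes "K4thm a" and "\<And>g. peval g a \<Longrightarrow> peval g b"
  shows "K4thm b"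
  using MP[OF K4thm_tautI assms(1), of b] assms(2) by simp

lemma K4thm_taut_mp2:
  assumes "K4thm a" and "K4thm b" and "\<And>g. peval g a \<Longrightarrow> peval g b \<Longrightarrow> peval g c"
  shows "K4thm c"
  using MP[OF MP[OF K4thm_tautI assms(1)] assms(2), of c] assms(3) by simp

section \<open>Soundness\<close>

lemma sat_peval: "sat M s a = peval (\<lambda>f. sat M s f) a"
  by (induction a) auto

lemma sat_Or [simp]: "sat M s (Or a b) = (sat M s a \<or> sat M s b)"
  by (simp add: Or_def)

lemma sat_Imp [simp]: "sat M s (Imp a b) = (sat M s a \<longrightarrow> sat M s b)"
  by (simp add: Imp_def)

lemma sat_Iff [simp]: "sat M s (Iff a b) = (sat M s a \<longleftrightarrow> sat M s b)"
  by (auto simp: Iff_def)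

lemma sat_Top [simp]: "sat M s Top"
  by (simp add: Top_def)

lemma sat_conj_list: "sat M s (conj_list L) = (\<forall>x\<in>set L. sat M s x)"
  by (induction L) (auto simp: conj_list_def)

lemma sat_Bdot_uniform:
  "sat (S, R1, R2, V) s (Bdot a) \<longleftrightarrow>
     (\<exists>v. \<forall>t u. (s, t) \<in> R1 \<and> (s, u) \<in> R2 \<longrightarrow>
        sat (S, R1, R2, V) t a = v \<and> sat (S, R1, R2, V) u a = v)"
  (is "?lhs \<longleftrightarrow> ?rhs")
proof
  assume ?lhs
  show ?rhs
  proof (cases "\<exists>t0 u0. (s, t0) \<in> R1 \<and> (s, u0) \<in> R2")
    case True
    then obtain t0 u0 where "(s, t0) \<in> R1" "(s, u0) \<in> R2" by blast
    with \<open>?lhs\<close> show ?rhs by (intro exI[of _ "sat (S, R1, R2, V) t0 a"]) auto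
  qed auto
qed auto

lemma sat_Bdot_if_true_at_successors:
  "(\<And>t. (s, t) \<in> R1 \<union> R2 \<Longrightarrow> sat (S, R1, R2, V) t a) \<Longrightarrow> sat (S, R1, R2, V) s (Bdot a)"
  by auto

lemma qt_iff: "qt (S, R1, R2, V) \<longleftrightarrow> (R1 \<union> R2) O R1 \<subseteq> R1 \<and> (R1 \<union> R2) O R2 \<subseteq> R2"
  unfolding qt_def rel_def by (simp add: relcomp_unfold subset_iff) blast

lemma pt_imp_qt: "pt M \<Longrightarrow> qt M"
  unfolding pt_def qt_def by blast

lemma sat_Bdot_successor:
  assumes "qt (S, R1, R2, V)" and "sat (S, R1, R2, V) s (Bdot a)" and "(s, t) \<in> R1 \<union> R2"
  shows "sat (S, R1, R2, V) t (Bdot a)"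
proof -
  have "(s, t') \<in> R1" if "(t, t') \<in> R1" for t'
    using assms(1,3) that unfolding qt_iff by blast
  moreover have "(s, u') \<in> R2" if "(t, u') \<in> R2" for u'
    using assms(1,3) that unfolding qt_iff by blast
  ultimately show ?thesis
    using assms(2) by auto
qed

lemma K4thm_sound:
  assumes "K4thm a" and "qt (S, R1, R2, V)"
  shows "sat (S, R1, R2, V) s a"
  using assms(1)
proof (induction arbitrary: s)
  case (Taut a)
  then show ?case by (subst sat_peval) (simp add: tautology_def)
next
  case BTop
  show ?case by simp
next
  case (BNeg a)
  show ?case by simp
next
  case (BAnd a b)
  show ?case by simp blast
next
  case (BSplit a b c)
  show ?case
    by (auto simp only: sat_Imp sat_Or sat_Bdot_uniform sat.simps(2))
next
  case (B4 a b)
  show ?case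
  proof (unfold sat_Imp, intro impI sat_Bdot_if_true_at_successors)
    fix t
    assume "sat (S, R1, R2, V) s (Bdot a)" and "(s, t) \<in> R1 \<union> R2"
    then have "sat (S, R1, R2, V) t (Bdot a)"
      by (rule sat_Bdot_successor[OF assms(2)])
    then show "sat (S, R1, R2, V) t (Or (Bdot a) b)"
      by simp
  qed
next
  case (MP a b)
  then show ?case by simp
next
  case (RE a b)
  then show ?case by simp
qed

lemma K4_derives_imp_conseq:
  assumes "K4_derives \<Gamma> \<phi>" and "\<And>M. C M \<Longrightarrow> qt M"
  shows "conseq T C \<Gamma> \<phi>"
  unfolding conseq_def
proof (intro allI impI)
  fix M s
  assume M: "is_model M \<and> C M \<and> s \<in> fst M \<and> (\<forall>g\<in>\<Gamma>. sat M s g)"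
  obtain L where L: "set L \<subseteq> \<Gamma>" "K4thm (Imp (conj_list L) \<phi>)"
    using assms(1) unfolding K4_derives_def by blast
  obtain S R1 R2 V where M_eq: "M = (S, R1, R2, V)" by (cases M) auto
  have "qt M" using M assms(2) by blast
  then have "sat M s (Imp (conj_list L) \<phi>)"
    unfolding M_eq by (rule K4thm_sound[OF L(2)])
  moreover have "sat M s (conj_list L)" using M L(1) by (auto simp: sat_conj_list)
  ultimately show "sat M s \<phi>" by simp
qed

section \<open>Maximal consistent sets\<close>

definition consistent :: "'p fm set \<Rightarrow> bool" where
  "consistent X \<longleftrightarrow> (\<forall>L. set L \<subseteq> X \<longrightarrow> \<not> K4thm (Neg (conj_list L)))"

definition mcs :: "'p fm set \<Rightarrow> bool" where
  "mcs X \<longleftrightarrow> consistent X \<and> (\<forall>a. a \<in> X \<or> Neg a \<in> X)"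

lemma K4_derives_taut_mp:
  assumes "K4_derives X a" and "\<And>g. peval g a \<Longrightarrow> peval g b"
  shows "K4_derives X b"
proof -
  obtain L where "set L \<subseteq> X" and "K4thm (Imp (conj_list L) a)"
    using assms(1) unfolding K4_derives_def by blast
  moreover have "K4thm (Imp (conj_list L) b)"
    using \<open>K4thm (Imp (conj_list L) a)\<close> by (rule K4thm_taut_mp) (simp add: assms(2))
  ultimately show ?thesis unfolding K4_derives_def by blast
qed

lemma K4_derives_contradiction:
  assumes "K4_derives X a" and "K4_derives X (Neg a)"
  shows "\<not> consistent X"
proof -
  obtain L1 L2 where L: "set L1 \<subseteq> X" "K4thm (Imp (conj_list L1) a)"
    "set L2 \<subseteq> X" "K4thm (Imp (conj_list L2) (Neg a))"
    using assms unfolding K4_derives_def by blast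
  have "K4thm (Neg (conj_list (L1 @ L2)))"
    using L(2,4) by (rule K4thm_taut_mp2) auto
  moreover have "set (L1 @ L2) \<subseteq> X"
    using L(1,3) by simp
  ultimately show ?thesis
    unfolding consistent_def by blast
qed

lemma consistent_insert_iff: "consistent (insert a X) \<longleftrightarrow> \<not> K4_derives X (Neg a)"
proof
  assume cons: "consistent (insert a X)"
  show "\<not> K4_derives X (Neg a)"
  proof
    assume "K4_derives X (Neg a)"
    then obtain L where "set L \<subseteq> X" "K4thm (Imp (conj_list L) (Neg a))"
      unfolding K4_derives_def by blast
    then have "set (a # L) \<subseteq> insert a X" "K4thm (Neg (conj_list (a # L)))"
      by (auto elim!: K4thm_taut_mp)
    with cons show False unfolding consistent_def by blast
  qed
next
  assume underivable: "\<not> K4_derives X (Neg a)"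
  show "consistent (insert a X)"
    unfolding consistent_def
  proof (intro allI impI notI)
    fix L
    assume "set L \<subseteq> insert a X" and "K4thm (Neg (conj_list L))"
    then have "set (removeAll a L) \<subseteq> X" "K4thm (Imp (conj_list (removeAll a L)) (Neg a))"
      by (auto elim!: K4thm_taut_mp)
    with underivable show False unfolding K4_derives_def by blast
  qed
qed

lemma consistent_insert_Neg: "\<not> K4_derives X a \<Longrightarrow> consistent (insert (Neg a) X)"
  using K4_derives_taut_mp[of X "Neg (Neg a)" a] by (auto simp: consistent_insert_iff)

lemma consistent_Union_chain:
  assumes "C \<noteq> {}" and "subset.chain A C" and "\<forall>Y\<in>C. consistent Y"
  shows "consistent (\<Union>C)"
  unfolding consistent_def
proof (intro allI impI)
  fix L
  assume "set L \<subseteq> \<Union>C"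
  then obtain Y where "Y \<in> C" and "set L \<subseteq> Y"
    using finite_subset_Union_chain[OF finite_set _ assms(1,2)] by blast
  then show "\<not> K4thm (Neg (conj_list L))"
    using assms(3) unfolding consistent_def by blast
qed

lemma maximal_consistent_imp_mcs:
  assumes "consistent M" and maximal: "\<And>Y. consistent Y \<Longrightarrow> M \<subseteq> Y \<Longrightarrow> Y = M"
  shows "mcs M"
  unfolding mcs_def
proof (intro conjI allI assms(1))
  fix a
  show "a \<in> M \<or> Neg a \<in> M"
  proof (rule ccontr)
    assume "\<not> (a \<in> M \<or> Neg a \<in> M)"
    then have "\<not> consistent (insert a M)" and "\<not> consistent (insert (Neg a) M)"
      using maximal by blast+
    then have "K4_derives M (Neg a)" and "K4_derives M (Neg (Neg a))"
      by (simp_all add: consistent_insert_iff)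
    with assms(1) show False
      using K4_derives_contradiction by blast
  qed
qed

lemma lindenbaum:
  assumes "consistent X"
  obtains M where "X \<subseteq> M" and "mcs M"
proof -
  let ?A = "{Y. X \<subseteq> Y \<and> consistent Y}"
  have "\<exists>M\<in>?A. \<forall>Y\<in>?A. M \<subseteq> Y \<longrightarrow> Y = M"
  proof (rule subset_Zorn_nonempty[of ?A])
    show "?A \<noteq> {}" using assms by blast
  next
    fix C
    assume "C \<noteq> {}" and chain: "subset.chain ?A C"
    then have "C \<subseteq> ?A" by (simp add: subset.chain_def)
    with \<open>C \<noteq> {}\<close> have "X \<subseteq> \<Union>C" by blast
    moreover have "consistent (\<Union>C)"
      using consistent_Union_chain[OF \<open>C \<noteq> {}\<close> chain] \<open>C \<subseteq> ?A\<close> by blast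
    ultimately show "\<Union>C \<in> ?A" by blast
  qed
  then obtain M where "M \<in> ?A" and maximal: "\<forall>Y\<in>?A. M \<subseteq> Y \<longrightarrow> Y = M"
    by (elim bexE)
  have "mcs M"
  proof (rule maximal_consistent_imp_mcs)
    show "consistent M" using \<open>M \<in> ?A\<close> by simp
  next
    fix Y
    assume "consistent Y" and "M \<subseteq> Y"
    with \<open>M \<in> ?A\<close> maximal show "Y = M" by auto
  qed
  with \<open>M \<in> ?A\<close> show thesis
    by (intro that) auto
qed

lemma K4_derives_mem: "a \<in> X \<Longrightarrow> K4_derives X a"
  unfolding K4_derives_def by (intro exI[of _ "[a]"]) (auto intro: K4thm_tautI)

lemma mcs_derives_mem:
  assumes "mcs X" and "K4_derives X a"
  shows "a \<in> X"
proof (rule ccontr)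
  assume "a \<notin> X"
  then have "K4_derives X (Neg a)"
    using assms(1) K4_derives_mem unfolding mcs_def by blast
  with assms show False
    using K4_derives_contradiction unfolding mcs_def by blast
qed

lemma mcs_Neg: "mcs X \<Longrightarrow> Neg a \<in> X \<longleftrightarrow> a \<notin> X"
  using K4_derives_mem K4_derives_contradiction unfolding mcs_def by blast

lemma mcs_mp:
  assumes "mcs X" and "a \<in> X" and "K4thm (Imp a b)"
  shows "b \<in> X"
proof -
  have "K4thm (Imp (conj_list [a]) b)"
    using assms(3) by (rule K4thm_taut_mp) simp
  with assms(2) have "K4_derives X b"
    unfolding K4_derives_def by (intro exI[of _ "[a]"]) simp
  with assms(1) show ?thesis by (rule mcs_derives_mem)
qed

lemma mcs_mp2:
  assumes "mcs X" and "a \<in> X" and "b \<in> X" and "K4thm (Imp a (Imp b c))"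
  shows "c \<in> X"
proof -
  have "K4thm (Imp (conj_list [a, b]) c)"
    using assms(4) by (rule K4thm_taut_mp) simp
  with assms(2,3) have "K4_derives X c"
    unfolding K4_derives_def by (intro exI[of _ "[a, b]"]) simp
  with assms(1) show ?thesis by (rule mcs_derives_mem)
qed

lemma mcs_thm:
  assumes "mcs X" and "K4thm a"
  shows "a \<in> X"
proof -
  have "K4thm (Imp (conj_list []) a)"
    using assms(2) by (rule K4thm_taut_mp) simp
  then have "K4_derives X a"
    unfolding K4_derives_def by (intro exI[of _ "[]"]) simp
  with assms(1) show ?thesis by (rule mcs_derives_mem)
qed

lemma mcs_And: "mcs X \<Longrightarrow> And a b \<in> X \<longleftrightarrow> a \<in> X \<and> b \<in> X"
  by (meson K4thm_tautI mcs_mp mcs_mp2 peval.simps(3) peval_Imp)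

lemma mcs_Bdot_cong:
  assumes "mcs X" and "\<And>g. peval g a = peval g b"
  shows "Bdot a \<in> X \<longleftrightarrow> Bdot b \<in> X"
proof -
  have "K4thm (Iff (Bdot a) (Bdot b))"
    by (rule RE, rule K4thm_tautI) (simp add: assms(2))
  then have "K4thm (Imp (Bdot a) (Bdot b))" and "K4thm (Imp (Bdot b) (Bdot a))"
    by (auto elim: K4thm_taut_mp)
  with assms(1) show ?thesis
    using mcs_mp by blast
qed

lemma mcs_Bdot_Neg: "mcs X \<Longrightarrow> Bdot (Neg a) \<in> X \<longleftrightarrow> Bdot a \<in> X"
  using BNeg[of a] by (meson K4thm_taut_mp mcs_mp peval_Iff peval_Imp)

lemma mcs_Bdot_And: "mcs X \<Longrightarrow> Bdot a \<in> X \<Longrightarrow> Bdot b \<in> X \<Longrightarrow> Bdot (And a b) \<in> X"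
  by (meson BAnd mcs_And mcs_mp)

lemma mcs_Bdot_split:
  assumes "mcs X" and "Bdot a \<in> X"
  shows "Bdot (Or a b) \<in> X \<or> Bdot (Or (Neg a) c) \<in> X"
proof -
  have "K4thm (Imp (Bdot a) (Imp (Neg (Bdot (Or a b))) (Bdot (Or (Neg a) c))))"
    using BSplit by (rule K4thm_taut_mp) auto
  with assms show ?thesis
    using mcs_mp2 mcs_Neg by blast
qed

lemma mcs_Bdot_4: "mcs X \<Longrightarrow> Bdot a \<in> X \<Longrightarrow> Bdot (Or (Bdot a) b) \<in> X"
  by (rule mcs_mp[OF _ _ B4])

section \<open>Canonical model\<close>

text \<open>\<open>a \<in> box X\<close> plays the role of ``\<open>a\<close> holds at every successor'': then \<open>a \<or> b\<close> is
  non-contingent for every \<open>b\<close>.\<close>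

definition box :: "'p fm set \<Rightarrow> 'p fm set" where
  "box X = {a. \<forall>b. Bdot (Or a b) \<in> X}"

lemma box_Top: "mcs X \<Longrightarrow> Top \<in> box X"
  unfolding box_def
  using mcs_Bdot_cong[of X "Or Top _" Top] mcs_thm[OF _ BTop] by auto

lemma box_And: "mcs X \<Longrightarrow> a \<in> box X \<Longrightarrow> b \<in> box X \<Longrightarrow> And a b \<in> box X"
  unfolding box_def
proof (intro CollectI allI)
  fix c
  assume "mcs X" and "a \<in> {a. \<forall>b. Bdot (Or a b) \<in> X}" and "b \<in> {a. \<forall>b. Bdot (Or a b) \<in> X}"
  then have "Bdot (And (Or a c) (Or b c)) \<in> X"
    using mcs_Bdot_And by blast
  with \<open>mcs X\<close> show "Bdot (Or (And a b) c) \<in> X"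
    using mcs_Bdot_cong[of X "And (Or a c) (Or b c)" "Or (And a b) c"] by auto
qed

lemma box_conj_list: "mcs X \<Longrightarrow> set L \<subseteq> box X \<Longrightarrow> conj_list L \<in> box X"
  by (induction L) (auto simp: conj_list_def box_Top box_And)

lemma box_mp: "mcs X \<Longrightarrow> a \<in> box X \<Longrightarrow> K4thm (Imp a b) \<Longrightarrow> b \<in> box X"
  unfolding box_def
proof (intro CollectI allI)
  fix c
  assume "mcs X" and "a \<in> {a. \<forall>b. Bdot (Or a b) \<in> X}" and "K4thm (Imp a b)"
  have "K4thm (Iff (Or a (Or b c)) (Or b c))"
    using \<open>K4thm (Imp a b)\<close> by (rule K4thm_taut_mp) auto
  then have "K4thm (Imp (Bdot (Or a (Or b c))) (Bdot (Or b c)))"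
    by (rule RE[THEN K4thm_taut_mp]) simp
  with \<open>mcs X\<close> \<open>a \<in> {a. \<forall>b. Bdot (Or a b) \<in> X}\<close> show "Bdot (Or b c) \<in> X"
    using mcs_mp by blast
qed

lemma box_derives_mem: "mcs X \<Longrightarrow> K4_derives (box X) a \<Longrightarrow> a \<in> box X"
  unfolding K4_derives_def using box_conj_list box_mp by blast

lemma box_imp_Bdot: "mcs X \<Longrightarrow> a \<in> box X \<Longrightarrow> Bdot a \<in> X"
  unfolding box_def using mcs_Bdot_cong[of X "Or a (Neg Top)" a] by auto

lemma Bdot_imp_box_or_box_Neg: "mcs X \<Longrightarrow> Bdot a \<in> X \<Longrightarrow> a \<in> box X \<or> Neg a \<in> box X"
  unfolding box_def using mcs_Bdot_split by blast

lemma box_subset_box: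
  assumes "mcs X" and "box X \<subseteq> Y"
  shows "box X \<subseteq> box Y"
proof
  fix a
  assume "a \<in> box X"
  then have "Bdot (Or a b) \<in> box X" for b
    using assms(1) mcs_Bdot_4 unfolding box_def by blast
  with assms(2) show "a \<in> box Y"
    unfolding box_def by blast
qed

lemma mcs_Bdot_iff:
  assumes "mcs X"
  shows "Bdot a \<in> X \<longleftrightarrow>
    (\<forall>Y Z. mcs Y \<and> box X \<subseteq> Y \<and> mcs Z \<and> box X \<subseteq> Z \<longrightarrow> (a \<in> Y \<longleftrightarrow> a \<in> Z))"
proof
  assume "Bdot a \<in> X"
  then have "a \<in> box X \<or> Neg a \<in> box X"
    using assms Bdot_imp_box_or_box_Neg by blast
  then show "\<forall>Y Z. mcs Y \<and> box X \<subseteq> Y \<and> mcs Z \<and> box X \<subseteq> Z \<longrightarrow> (a \<in> Y \<longleftrightarrow> a \<in> Z)"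
    using mcs_Neg by blast
next
  assume agree: "\<forall>Y Z. mcs Y \<and> box X \<subseteq> Y \<and> mcs Z \<and> box X \<subseteq> Z \<longrightarrow> (a \<in> Y \<longleftrightarrow> a \<in> Z)"
  show "Bdot a \<in> X"
  proof (rule ccontr)
    assume "Bdot a \<notin> X"
    then have "\<not> K4_derives (box X) (Neg a)" and "\<not> K4_derives (box X) a"
      using assms box_derives_mem box_imp_Bdot mcs_Bdot_Neg by blast+
    then have "consistent (insert a (box X))" and "consistent (insert (Neg a) (box X))"
      using consistent_insert_iff consistent_insert_Neg by blast+
    then obtain Y Z where "insert a (box X) \<subseteq> Y" "mcs Y" "insert (Neg a) (box X) \<subseteq> Z" "mcs Z"
      by (meson lindenbaum)
    with agree show False
      using mcs_Neg by blast
  qed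
qed

text \<open>States have the fixed type \<open>'p fm set set\<close>, so the MCS \<open>X\<close> is represented by the
  state \<open>{X}\<close>.\<close>

definition canon_states :: "'p fm set set set" where
  "canon_states = {{X} | X. mcs X}"

definition canon_rel :: "('p fm set set \<times> 'p fm set set) set" where
  "canon_rel = {({X}, {Y}) | X Y. mcs X \<and> mcs Y \<and> box X \<subseteq> Y}"

definition canon_val :: "'p \<Rightarrow> 'p fm set set set" where
  "canon_val p = {{X} | X. mcs X \<and> Atom p \<in> X}"

abbreviation canon_model :: "('p fm set set, 'p) model" where
  "canon_model \<equiv> (canon_states, canon_rel, canon_rel, canon_val)"

lemma canon_rel_from_singleton:
  "({X}, t) \<in> canon_rel \<longleftrightarrow> (\<exists>Y. t = {Y} \<and> mcs X \<and> mcs Y \<and> box X \<subseteq> Y)"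
  unfolding canon_rel_def by auto

lemma truth_lemma: "mcs X \<Longrightarrow> sat canon_model {X} a \<longleftrightarrow> a \<in> X"
proof (induction a arbitrary: X)
  case (Atom p)
  then show ?case by (auto simp: canon_val_def)
next
  case (Neg a)
  then show ?case using mcs_Neg by auto
next
  case (And a b)
  then show ?case using mcs_And[OF And.prems] by simp
next
  case (Bdot a)
  have "sat canon_model {X} (Bdot a) \<longleftrightarrow>
      (\<forall>Y Z. mcs Y \<and> box X \<subseteq> Y \<and> mcs Z \<and> box X \<subseteq> Z \<longrightarrow>
        (sat canon_model {Y} a \<longleftrightarrow> sat canon_model {Z} a))"
    using Bdot.prems by (simp add: canon_rel_from_singleton) blast
  also have "\<dots> \<longleftrightarrow> (\<forall>Y Z. mcs Y \<and> box X \<subseteq> Y \<and> mcs Z \<and> box X \<subseteq> Z \<longrightarrow> (a \<in> Y \<longleftrightarrow> a \<in> Z))"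
    using Bdot.IH by blast
  also have "\<dots> \<longleftrightarrow> Bdot a \<in> X"
    using mcs_Bdot_iff[OF Bdot.prems] by simp
  finally show ?case .
qed

lemma canon_model_is_model:
  fixes X :: "'p fm set"
  assumes "mcs X"
  shows "is_model (canon_model :: ('p fm set set, 'p) model)"
  unfolding is_model_def canon_states_def canon_rel_def canon_val_def using assms by auto

lemma canon_rel_trans: "trans canon_rel"
proof (rule transI)
  fix x y z
  assume "(x, y) \<in> canon_rel" and "(y, z) \<in> canon_rel"
  then obtain X Y Z where "x = {X}" "z = {Z}" "mcs X" "mcs Z" "box X \<subseteq> Y" "box Y \<subseteq> Z"
    unfolding canon_rel_def by auto
  moreover from this have "box X \<subseteq> Z"
    using box_subset_box by blast
  ultimately show "(x, z) \<in> canon_rel"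
    unfolding canon_rel_def by auto
qed

lemma canon_model_pt: "pt canon_model"
  using canon_rel_trans unfolding pt_def rel_def by (auto dest: transD)

lemma conseq_mono:
  "conseq T C \<Gamma> \<phi> \<Longrightarrow> (\<And>M. C' M \<Longrightarrow> C M) \<Longrightarrow> conseq T C' \<Gamma> \<phi>"
  unfolding conseq_def by blast

theorem pt_conseq_imp_K4_derives:
  fixes \<Gamma> :: "'p fm set"
  assumes "pt_conseq TYPE('p fm set set) \<Gamma> \<phi>"
  shows "K4_derives \<Gamma> \<phi>"
proof (rule ccontr)
  assume "\<not> K4_derives \<Gamma> \<phi>"
  then obtain X where "insert (Neg \<phi>) \<Gamma> \<subseteq> X" and "mcs X"
    using consistent_insert_Neg lindenbaum by metis
  then have "{X} \<in> canon_states" and "\<forall>g\<in>\<Gamma>. sat canon_model {X} g"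
    using truth_lemma by (auto simp: canon_states_def)
  moreover have valid: "sat M s \<phi>"
    if "is_model M" and "pt M" and "s \<in> fst M" and "\<forall>g\<in>\<Gamma>. sat M s g"
    for M :: "('p fm set set, 'p) model" and s
    using assms that unfolding conseq_def by blast
  ultimately have "sat canon_model {X} \<phi>"
    using canon_model_is_model[OF \<open>mcs X\<close>] canon_model_pt by (intro valid) simp_all
  with \<open>mcs X\<close> \<open>insert (Neg \<phi>) \<Gamma> \<subseteq> X\<close> show False
    using truth_lemma mcs_Neg by blast
qed

theorem mainTheorem19:
  fixes \<Gamma> :: "'p fm set" and \<phi> :: "'p fm"
  shows "(K4_derives \<Gamma> \<phi> \<longrightarrow> qt_conseq TYPE('s) \<Gamma> \<phi> \<and> pt_conseq TYPE('s) \<Gamma> \<phi>)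
       \<and> (qt_conseq TYPE('p fm set set) \<Gamma> \<phi> \<longrightarrow> K4_derives \<Gamma> \<phi>)
       \<and> (pt_conseq TYPE('p fm set set) \<Gamma> \<phi> \<longrightarrow> K4_derives \<Gamma> \<phi>)"
proof (intro conjI impI)
  assume "K4_derives \<Gamma> \<phi>"
  then show "qt_conseq TYPE('s) \<Gamma> \<phi>" and "pt_conseq TYPE('s) \<Gamma> \<phi>"
    using K4_derives_imp_conseq pt_imp_qt by blast+
next
  assume "qt_conseq TYPE('p fm set set) \<Gamma> \<phi>"
  then have "pt_conseq TYPE('p fm set set) \<Gamma> \<phi>"
    using conseq_mono pt_imp_qt by blast
  then show "K4_derives \<Gamma> \<phi>"
    by (rule pt_conseq_imp_K4_derives)
next
  assume "pt_conseq TYPE('p fm set set) \<Gamma> \<phi>"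
  then show "K4_derives \<Gamma> \<phi>"
    by (rule pt_conseq_imp_K4_derives)
qed

end
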